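(* Let $(u_n)_{n\in\mathbb N}$ be a nondecreasing sequence in $\{0,1\}$ and put $v_n=u_n+1$. In Martin-Löf's sequent calculus for ordinals, let $a=\mathrm S(\underline{u_n})_{n\in\mathbb N}$ and $b=\mathrm S(\underline{v_n})_{n\in\mathbb N}$. Then the sequent consisting of the single atomic formula $a<b$ is provable.
   Context: Martin-Löf's system: ordinals are inductively generated by the rule that for every finite or infinite sequence $u=(u_0,u_1,\dots)$ of ordinals (possibly empty), $\mathrm S(u)$ is an ordinal. $\underline 0$ is $\mathrm S$ of the empty sequence, $\mathrm{succ}(a)$ is $\mathrm S$ of the one-element sequence $(a)$, and $\underline{k+1}=\mathrm{succ}(\underline k)$. Atomic formulae are $a<b$ and $a\le b$ for ordinals $a,b$. A sequent is a finite set $\Gamma$ of atomic formulae (intuitively their classical disjunction); provable sequents are generated inductively by the two rules: from $\Gamma, a\le u_n$ for some index $n$ of $u$, infer $\Gamma, a<\mathrm S(u)$; from $\Gamma, u_n<b$ for every index $n$ of $u$, infer $\Gamma,\mathrm S(u)\le b$ (in particular $\Gamma,\mathrm S(\text{empty})\le b$ is provable). Here "$\Gamma,\varphi$" denotes $\Gamma\cup\{\varphi\}$. *)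

theory Defs
  imports Main
begin

text \<open>Martin-Loef ordinals: S applied to a finite sequence (list) or an
  infinite sequence (function on nat).\<close>
datatype ml_ord = Sf "ml_ord list" | Si "nat \<Rightarrow> ml_ord"

fun comps :: "ml_ord \<Rightarrow> ml_ord set" where
  "comps (Sf us) = set us"
| "comps (Si u) = range u"

fun numeral_ord :: "nat \<Rightarrow> ml_ord" where
  "numeral_ord 0 = Sf []"
| "numeral_ord (Suc k) = Sf [numeral_ord k]"

datatype ml_atom = Lt ml_ord ml_ord | Le ml_ord ml_ord

inductive provable :: "ml_atom set \<Rightarrow> bool" where
  lt_rule: "\<lbrakk>finite \<Gamma>; u \<in> comps s; provable (insert (Le a u) \<Gamma>)\<rbrakk>
            \<Longrightarrow> provable (insert (Lt a s) \<Gamma>)"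
| le_rule: "\<lbrakk>finite \<Gamma>; \<forall>u\<in>comps s. provable (insert (Lt u b) \<Gamma>)\<rbrakk>
            \<Longrightarrow> provable (insert (Le s b) \<Gamma>)"

end

theory Submission
  imports Defs
begin

text \<open>Pick an index \<open>n\<close> at which \<open>u\<close> is maximal. Then every entry \<open>u\<^sub>m\<close> of \<open>a\<close> is a
  numeral below \<open>v\<^sub>n = u\<^sub>n + 1\<close>, so the \<open>\<le>\<close>-rule gives \<open>a \<le> v\<^sub>n\<close>, and since \<open>v\<^sub>n\<close> is an
  entry of \<open>b\<close>, the \<open><\<close>-rule gives \<open>a < b\<close>.\<close>

lemma provable_Lt_singletonI:
  assumes "u \<in> comps s" and "provable {Le a u}"
  shows "provable {Lt a s}"
  using lt_rule[of "{}" u s a] assms by simp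

lemma provable_Le_singletonI:
  assumes "\<And>u. u \<in> comps s \<Longrightarrow> provable {Lt u b}"
  shows "provable {Le s b}"
  using le_rule[of "{}" s b] assms by simp

lemma provable_Le_numeral_ord:
  "k \<le> j \<Longrightarrow> provable {Le (numeral_ord k) (numeral_ord j)}"
proof (induction k arbitrary: j)
  case 0
  show ?case by (rule provable_Le_singletonI) simp
next
  case (Suc k)
  then obtain j' where j: "j = Suc j'" and "k \<le> j'"
    by (cases j) auto
  then have "provable {Lt (numeral_ord k) (numeral_ord j)}"
    using Suc.IH by (intro provable_Lt_singletonI[of "numeral_ord j'"]) simp_all
  then show ?case
    by (intro provable_Le_singletonI) simp
qed

lemma provable_Lt_numeral_ord:
  assumes "k < j"
  shows "provable {Lt (numeral_ord k) (numeral_ord j)}"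
proof -
  obtain j' where "j = Suc j'" and "k \<le> j'"
    using assms by (cases j) auto
  then show ?thesis
    using provable_Le_numeral_ord by (intro provable_Lt_singletonI[of "numeral_ord j'"]) simp_all
qed

lemma provable_Le_Si_numeral_ord:
  assumes "\<And>m. u m < k"
  shows "provable {Le (Si (\<lambda>m. numeral_ord (u m))) (numeral_ord k)}"
  using assms provable_Lt_numeral_ord by (intro provable_Le_singletonI) auto

lemma provable_Lt_Si_numeral_ord:
  assumes "\<And>m. u m < v n"
  shows "provable {Lt (Si (\<lambda>m. numeral_ord (u m))) (Si (\<lambda>m. numeral_ord (v m)))}"
  using provable_Le_Si_numeral_ord[OF assms]
  by (intro provable_Lt_singletonI[of "numeral_ord (v n)"]) simp_all

theorem lemma5p4:
  fixes u v :: "nat \<Rightarrow> nat"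
  assumes "mono u"
    and "\<forall>n. u n \<in> {0, 1}"
    and "\<forall>n. v n = u n + 1"
  shows "provable {Lt (Si (\<lambda>n. numeral_ord (u n))) (Si (\<lambda>n. numeral_ord (v n)))}"
proof -
  obtain n where u_max: "\<And>m. u m \<le> u n"
  proof (cases "\<exists>n. u n = 1")
    case True
    then obtain n where "u n = 1" by blast
    moreover have "u m \<le> 1" for m
      using assms(2)[rule_format, of m] by auto
    ultimately show ?thesis
      using that[of n] by simp
  next
    case False
    then show ?thesis using assms(2) that[of 0] by fastforce
  qed
  then have "\<And>m. u m < v n"
    using assms(3) u_max by (simp add: less_Suc_eq_le)
  then show ?thesis
    by (rule provable_Lt_Si_numeral_ord)
qed

end
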